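(* Let $f\in C_b(\Omega\times\mathcal{R})$ and $t\in(0,1)$. Let $(\hat\pi_1,\phi_1)$ and $(\hat\pi_2,\phi_2)$ be pairs where each $\hat\pi_i$ is an environment kernel and $\phi_i$ is a probability density with respect to $\mathbb{P}$ such that $\phi_i\,\mathrm{d}\mathbb{P}$ is $\hat\pi_i$-invariant. Define $\gamma:=\frac{t\phi_1}{t\phi_1+(1-t)\phi_2}$, $\phi_3:=t\phi_1+(1-t)\phi_2$ and $\hat\pi_3:=\gamma\hat\pi_1+(1-\gamma)\hat\pi_2$. Then $\phi_3\,\mathrm{d}\mathbb{P}$ is $\hat\pi_3$-invariant and $H_f(\hat\pi_3,\phi_3)\ge tH_f(\hat\pi_1,\phi_1)+(1-t)H_f(\hat\pi_2,\phi_2)$.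
   Context: Let $d,B\ge1$, $\mathcal{R}:=\{z\in\mathbb{Z}^d:0<|z_1|+\cdots+|z_d|\le B\}$. An environment is $\omega=(\omega_x)_{x\in\mathbb{Z}^d}$ with $\omega_x=(\pi(x,x+z))_{z\in\mathcal{R}}$ a probability vector; $\Omega$ is the environment space, $(T_z\omega)_x=\omega_{x+z}$, $\mathbb{P}$ a probability on $\Omega$ stationary and ergodic under shifts. An environment kernel is a measurable $\hat\pi:\Omega\times\mathcal{R}\to[0,\infty)$ with $\sum_z\hat\pi(\cdot,z)=1$ $\mathbb{P}$-a.s. For a probability density $\phi$ w.r.t. $\mathbb{P}$, $\phi\,\mathrm{d}\mathbb{P}$ is $\hat\pi$-invariant if $\phi(\omega)=\sum_{z\in\mathcal{R}}\phi(T_{-z}\omega)\hat\pi(T_{-z}\omega,z)$ for $\mathbb{P}$-a.e. $\omega$. For $f\in C_b(\Omega\times\mathcal{R})$, $H_f(\hat\pi,\phi):=\int\sum_{z\in\mathcal{R}}\hat\pi(\omega,z)\left(f(\omega,z)-\log\frac{\hat\pi(\omega,z)}{\pi(0,z)}\right)\phi(\omega)\,\mathrm{d}\mathbb{P}(\omega)$. *)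

theory Defs
  imports "HOL-Probability.Probability"
begin

text \<open>Sites are elements of int^'d (d = CARD('d) >= 1).  An environment omega is
  encoded as a function with omega x z = pi(x, x+z) for z in the step set R.\<close>

type_synonym 'd env = "int ^ 'd \<Rightarrow> int ^ 'd \<Rightarrow> real"

definition steps :: "nat \<Rightarrow> (int ^ 'd::finite) set" where
  "steps B = {z. 0 < (\<Sum>i\<in>UNIV. \<bar>z $ i\<bar>) \<and> (\<Sum>i\<in>UNIV. \<bar>z $ i\<bar>) \<le> int B}"

definition env_space :: "nat \<Rightarrow> ('d::finite) env set" where
  "env_space B = {\<omega>. \<forall>x. (\<forall>z. z \<notin> steps B \<longrightarrow> \<omega> x z = 0)
       \<and> (\<forall>z\<in>steps B. 0 \<le> \<omega> x z) \<and> (\<Sum>z\<in>steps B. \<omega> x z) = 1}"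

definition shift :: "int ^ 'd \<Rightarrow> ('d::finite) env \<Rightarrow> 'd env" where
  "shift z \<omega> = (\<lambda>x. \<omega> (x + z))"

definition standing_env :: "nat \<Rightarrow> ('d::finite) env measure \<Rightarrow> bool" where
  "standing_env B P \<longleftrightarrow> prob_space P \<and> space P = env_space B
     \<and> sets P = sets (restrict_space borel (env_space B))
     \<and> (\<forall>z. shift z \<in> P \<rightarrow>\<^sub>M P \<and> distr P P (shift z) = P)
     \<and> (\<forall>A\<in>sets P. (\<forall>z. shift z -` A \<inter> space P = A)
            \<longrightarrow> measure P A = 0 \<or> measure P A = 1)"

text \<open>f in C_b(Omega x R).  Since R is finite and discrete, continuity on Omega x R
  means continuity of each slice f(.,z) on Omega.\<close>
definition Cb :: "nat \<Rightarrow> (('d::finite) env \<Rightarrow> int ^ 'd \<Rightarrow> real) \<Rightarrow> bool" where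
  "Cb B f \<longleftrightarrow> (\<forall>z\<in>steps B. continuous_on (env_space B) (\<lambda>\<omega>. f \<omega> z))
     \<and> (\<exists>C. \<forall>\<omega>\<in>env_space B. \<forall>z\<in>steps B. \<bar>f \<omega> z\<bar> \<le> C)"

definition env_kernel :: "nat \<Rightarrow> ('d::finite) env measure \<Rightarrow> ('d env \<Rightarrow> int ^ 'd \<Rightarrow> real) \<Rightarrow> bool" where
  "env_kernel B P k \<longleftrightarrow> (\<forall>z\<in>steps B. (\<lambda>\<omega>. k \<omega> z) \<in> borel_measurable P)
     \<and> (\<forall>\<omega>\<in>space P. \<forall>z\<in>steps B. 0 \<le> k \<omega> z)
     \<and> (AE \<omega> in P. (\<Sum>z\<in>steps B. k \<omega> z) = 1)"

definition prob_density :: "'a measure \<Rightarrow> ('a \<Rightarrow> real) \<Rightarrow> bool" where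
  "prob_density P \<phi> \<longleftrightarrow> \<phi> \<in> borel_measurable P \<and> (\<forall>\<omega>\<in>space P. 0 \<le> \<phi> \<omega>)
     \<and> integrable P \<phi> \<and> (\<integral>\<omega>. \<phi> \<omega> \<partial>P) = 1"

definition kernel_invariant :: "nat \<Rightarrow> ('d::finite) env measure \<Rightarrow> ('d env \<Rightarrow> int ^ 'd \<Rightarrow> real)
     \<Rightarrow> ('d env \<Rightarrow> real) \<Rightarrow> bool" where
  "kernel_invariant B P k \<phi> \<longleftrightarrow>
     (AE \<omega> in P. \<phi> \<omega> = (\<Sum>z\<in>steps B. \<phi> (shift (- z) \<omega>) * k (shift (- z) \<omega>) z))"

text \<open>Pointwise summand k(omega,z) (f(omega,z) - log (k(omega,z)/pi(0,z))), extended-real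
  valued, with the conventions 0 log 0 = 0 and a log (a/0) = +infinity for a > 0.\<close>
definition H_term :: "('d::finite) env \<Rightarrow> int ^ 'd \<Rightarrow> ('d env \<Rightarrow> int ^ 'd \<Rightarrow> real)
     \<Rightarrow> ('d env \<Rightarrow> int ^ 'd \<Rightarrow> real) \<Rightarrow> ereal" where
  "H_term \<omega> z f k =
     (if k \<omega> z = 0 then 0
      else if \<omega> 0 z = 0 then - \<infinity>
      else ereal (k \<omega> z * (f \<omega> z - ln (k \<omega> z / \<omega> 0 z))))"

definition H_integrand :: "nat \<Rightarrow> ('d::finite) env \<Rightarrow> ('d env \<Rightarrow> int ^ 'd \<Rightarrow> real)
     \<Rightarrow> ('d env \<Rightarrow> int ^ 'd \<Rightarrow> real) \<Rightarrow> ('d env \<Rightarrow> real) \<Rightarrow> ereal" where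
  "H_integrand B \<omega> f k \<phi> = (\<Sum>z\<in>steps B. H_term \<omega> z f k) * ereal (\<phi> \<omega>)"

definition H_f :: "nat \<Rightarrow> ('d::finite) env measure \<Rightarrow> ('d env \<Rightarrow> int ^ 'd \<Rightarrow> real)
     \<Rightarrow> ('d env \<Rightarrow> int ^ 'd \<Rightarrow> real) \<Rightarrow> ('d env \<Rightarrow> real) \<Rightarrow> ereal" where
  "H_f B P f k \<phi> =
     enn2ereal (\<integral>\<^sup>+ \<omega>. e2ennreal (H_integrand B \<omega> f k \<phi>) \<partial>P)
     - enn2ereal (\<integral>\<^sup>+ \<omega>. e2ennreal (- H_integrand B \<omega> f k \<phi>) \<partial>P)"

end

theory Submission
  imports Defs
begin

text \<open>In terms of the flux \<open>\<phi> k\<close>, the mixed pair is the convex combination of the two given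
  pairs: \<open>\<phi>3 k3 = t \<phi>1 k1 + (1 - t) \<phi>2 k2\<close>. The invariance equation is linear in the flux, so it
  passes to the mixture. The integrand of \<open>H_f\<close> is \<open>\<phi> \<Sum>z. h (k z)\<close> with
  \<open>h x = x (F - ln (x / \<pi>))\<close>, and concavity of \<open>h\<close> (the log-sum inequality) makes the integrand of
  the mixture dominate the convex combination of the two integrands. These integrands may take the
  value \<open>-\<infinity>\<close> but never \<open>\<infinity>\<close>, and their positive parts are integrable, so the pointwise
  inequality survives integrating positive and negative parts separately.\<close>

section \<open>The entropy density\<close>

definition entropy_term_real :: "real \<Rightarrow> real \<Rightarrow> real \<Rightarrow> real" where
  "entropy_term_real k p F = (if k = 0 then 0 else k * (F - ln (k / p)))"

definition entropy_term :: "real \<Rightarrow> real \<Rightarrow> real \<Rightarrow> ereal" where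
  "entropy_term k p F = (if k \<noteq> 0 \<and> p = 0 then - \<infinity> else ereal (entropy_term_real k p F))"

lemma H_term_eq_entropy_term: "H_term \<omega> z f k = entropy_term (k \<omega> z) (\<omega> 0 z) (f \<omega> z)"
  by (simp add: H_term_def entropy_term_def entropy_term_real_def)

lemma mult_ln_div_le:
  fixes p r :: real
  assumes "0 \<le> p" "0 < r"
  shows "p * ln (r / p) \<le> r - p"
proof (cases "p = 0")
  case False
  then have "p > 0" using assms(1) by simp
  moreover have "ln (r / p) \<le> r / p - 1" using assms \<open>p > 0\<close> by (intro ln_le_minus_one) simp
  ultimately have "p * ln (r / p) \<le> p * (r / p - 1)" by (intro mult_left_mono) auto
  also have "\<dots> = r - p" using \<open>p > 0\<close> by (simp add: algebra_simps)
  finally show ?thesis .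
qed (use assms in simp)

lemma entropy_term_real_concave:
  fixes p q \<pi> F \<gamma> :: real
  assumes "0 < \<pi>" "0 \<le> p" "0 \<le> q" "0 \<le> \<gamma>" "\<gamma> \<le> 1"
  shows "\<gamma> * entropy_term_real p \<pi> F + (1 - \<gamma>) * entropy_term_real q \<pi> F
     \<le> entropy_term_real (\<gamma> * p + (1 - \<gamma>) * q) \<pi> F"
proof -
  define r where "r = \<gamma> * p + (1 - \<gamma>) * q"
  have nonneg: "0 \<le> \<gamma> * p" "0 \<le> (1 - \<gamma>) * q" using assms by auto
  show ?thesis
  proof (cases "r = 0")
    case True
    then have "\<gamma> * p = 0" "(1 - \<gamma>) * q = 0" using nonneg r_def by linarith+
    then show ?thesis using True unfolding r_def by (auto simp: entropy_term_real_def)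
  next
    case False
    then have "0 < r" using nonneg r_def by linarith
    define X where "X = F - ln (r / \<pi>)"
    have split: "entropy_term_real x \<pi> F = x * X + x * ln (r / x)" if "0 \<le> x" for x
      using that \<open>0 < r\<close> assms(1) unfolding X_def
      by (cases "x = 0") (auto simp: entropy_term_real_def ln_div algebra_simps)
    have "\<gamma> * entropy_term_real p \<pi> F + (1 - \<gamma>) * entropy_term_real q \<pi> F
        = r * X + (\<gamma> * (p * ln (r / p)) + (1 - \<gamma>) * (q * ln (r / q)))"
      using assms by (simp add: split r_def algebra_simps)
    also have "\<dots> \<le> r * X + (\<gamma> * (r - p) + (1 - \<gamma>) * (r - q))"
      using assms \<open>0 < r\<close> by (intro add_left_mono add_mono mult_left_mono mult_ln_div_le) auto
    also have "\<dots> = entropy_term_real r \<pi> F"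
      using split[of r] \<open>0 < r\<close> by (simp add: r_def algebra_simps)
    finally show ?thesis unfolding r_def .
  qed
qed

lemma entropy_term_le:
  assumes "0 \<le> k" "k \<le> 1" "0 \<le> p" "p \<le> 1" "\<bar>F\<bar> \<le> C"
  shows "entropy_term k p F \<le> ereal (C + 1)"
proof (cases "k = 0 \<or> p = 0")
  case True
  then show ?thesis using assms(5) by (auto simp: entropy_term_def entropy_term_real_def)
next
  case False
  then have "0 < k" "0 < p" using assms by auto
  have "k * F \<le> C"
    using assms mult_mono[of k 1 "\<bar>F\<bar>" C] abs_ge_self[of "k * F"] by (simp add: abs_mult)
  moreover have "k * ln (p / k) \<le> p - k" using \<open>0 < k\<close> \<open>0 < p\<close> by (intro mult_ln_div_le) auto
  moreover have "ln (k / p) = - ln (p / k)" using \<open>0 < k\<close> \<open>0 < p\<close> by (simp add: ln_div)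
  ultimately show ?thesis using False assms by (simp add: entropy_term_def entropy_term_real_def algebra_simps)
qed

lemma convex_weight_bounds:
  fixes u1 u2 :: real
  assumes "0 \<le> u1" "0 \<le> u2"
  shows "0 \<le> u1 / (u1 + u2)" "u1 / (u1 + u2) \<le> 1"
  using assms by (auto simp: divide_le_eq_1)

lemma convex_weight_mix:
  fixes u1 u2 a b :: real
  assumes "0 \<le> u1" "0 \<le> u2"
  shows "(u1 + u2) * (u1 / (u1 + u2) * a + (1 - u1 / (u1 + u2)) * b) = u1 * a + u2 * b"
proof (cases "u1 + u2 = 0")
  case False
  then have w: "(u1 + u2) * (u1 / (u1 + u2)) = u1" "(u1 + u2) * (1 - u1 / (u1 + u2)) = u2"
    by (simp_all add: field_simps)
  have "(u1 + u2) * (u1 / (u1 + u2) * a + (1 - u1 / (u1 + u2)) * b)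
      = (u1 + u2) * (u1 / (u1 + u2)) * a + (u1 + u2) * (1 - u1 / (u1 + u2)) * b"
    by (simp only: distrib_left mult.assoc)
  then show ?thesis unfolding w .
qed (use assms in \<open>simp add: add_nonneg_eq_0_iff\<close>)

lemma convex_weight_mix_bounded:
  fixes u1 u2 a b :: real
  assumes "0 \<le> u1" "0 \<le> u2" "0 \<le> a" "a \<le> 1" "0 \<le> b" "b \<le> 1"
  shows "0 \<le> u1 / (u1 + u2) * a + (1 - u1 / (u1 + u2)) * b
    \<and> u1 / (u1 + u2) * a + (1 - u1 / (u1 + u2)) * b \<le> 1"
proof -
  define \<gamma> where "\<gamma> = u1 / (u1 + u2)"
  have "0 \<le> \<gamma>" "\<gamma> \<le> 1" unfolding \<gamma>_def using convex_weight_bounds[OF assms(1,2)] by auto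
  then have "0 \<le> \<gamma> * a" "0 \<le> (1 - \<gamma>) * b" "\<gamma> * a \<le> \<gamma>" "(1 - \<gamma>) * b \<le> 1 - \<gamma>"
    using assms(3-6) by (auto intro: mult_left_le)
  then show ?thesis unfolding \<gamma>_def[symmetric] by linarith
qed

lemma mult_entropy_term_real_concave:
  fixes u1 u2 k1 k2 p F :: real
  assumes "0 \<le> u1" "0 \<le> u2" "0 \<le> k1" "0 \<le> k2" "0 \<le> p"
    and null: "p = 0 \<Longrightarrow> u1 * k1 = 0 \<and> u2 * k2 = 0"
  shows "u1 * entropy_term_real k1 p F + u2 * entropy_term_real k2 p F
     \<le> (u1 + u2) * entropy_term_real (u1 / (u1 + u2) * k1 + (1 - u1 / (u1 + u2)) * k2) p F"
proof (cases "p = 0")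
  case True
  have "(u1 + u2) * (u1 / (u1 + u2) * k1 + (1 - u1 / (u1 + u2)) * k2) = 0"
    using null[OF True] convex_weight_mix[OF assms(1,2), of k1 k2] by auto
  then have "u1 + u2 = 0 \<or> u1 / (u1 + u2) * k1 + (1 - u1 / (u1 + u2)) * k2 = 0" by simp
  then show ?thesis using null[OF True] by (auto simp: entropy_term_real_def)
next
  case False
  have "u1 * entropy_term_real k1 p F + u2 * entropy_term_real k2 p F
      = (u1 + u2) * (u1 / (u1 + u2) * entropy_term_real k1 p F
          + (1 - u1 / (u1 + u2)) * entropy_term_real k2 p F)"
    using convex_weight_mix[OF assms(1,2)] by simp
  also have "\<dots> \<le> (u1 + u2) * entropy_term_real (u1 / (u1 + u2) * k1 + (1 - u1 / (u1 + u2)) * k2) p F"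
    using assms False convex_weight_bounds[OF assms(1,2)]
    by (intro mult_left_mono entropy_term_real_concave) auto
  finally show ?thesis .
qed

lemma sum_entropy_term:
  assumes "finite S"
  shows "(\<Sum>z\<in>S. entropy_term (k z) (p z) (F z))
    = (if \<exists>z\<in>S. k z \<noteq> 0 \<and> p z = 0 then - \<infinity>
       else ereal (\<Sum>z\<in>S. entropy_term_real (k z) (p z) (F z)))"
proof (cases "\<exists>z\<in>S. k z \<noteq> 0 \<and> p z = 0")
  case True
  then obtain z0 where z0: "z0 \<in> S" "k z0 \<noteq> 0" "p z0 = 0" by blast
  have "(\<Sum>z\<in>S - {z0}. entropy_term (k z) (p z) (F z)) \<noteq> \<infinity>"
    by (simp add: sum_Pinfty entropy_term_def)
  then have "entropy_term (k z0) (p z0) (F z0) + (\<Sum>z\<in>S - {z0}. entropy_term (k z) (p z) (F z)) = - \<infinity>"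
    using z0 by (cases "\<Sum>z\<in>S - {z0}. entropy_term (k z) (p z) (F z)") (auto simp: entropy_term_def)
  then show ?thesis using True z0 assms by (simp add: sum.remove)
next
  case False
  then have "(\<Sum>z\<in>S. entropy_term (k z) (p z) (F z)) = (\<Sum>z\<in>S. ereal (entropy_term_real (k z) (p z) (F z)))"
    by (intro sum.cong) (auto simp: entropy_term_def)
  with False show ?thesis by simp
qed

lemma ereal_mult_sum_entropy_term:
  assumes "finite S" "0 \<le> u" "\<And>z. z \<in> S \<Longrightarrow> p z = 0 \<Longrightarrow> u * k z = 0"
  shows "ereal u * (\<Sum>z\<in>S. entropy_term (k z) (p z) (F z))
    = ereal (u * (\<Sum>z\<in>S. entropy_term_real (k z) (p z) (F z)))"
  using assms by (cases "u = 0") (auto simp: sum_entropy_term zero_ereal_def[symmetric])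

lemma sum_entropy_term_concave:
  fixes u1 u2 :: real and k1 k2 p F :: "'z \<Rightarrow> real"
  assumes "finite S" "0 \<le> u1" "0 \<le> u2" "\<And>z. z \<in> S \<Longrightarrow> 0 \<le> k1 z \<and> 0 \<le> k2 z \<and> 0 \<le> p z"
  defines "\<gamma> \<equiv> u1 / (u1 + u2)"
  shows "ereal u1 * (\<Sum>z\<in>S. entropy_term (k1 z) (p z) (F z))
       + ereal u2 * (\<Sum>z\<in>S. entropy_term (k2 z) (p z) (F z))
     \<le> ereal (u1 + u2) * (\<Sum>z\<in>S. entropy_term (\<gamma> * k1 z + (1 - \<gamma>) * k2 z) (p z) (F z))"
    (is "?E1 + ?E2 \<le> ?E3")
proof (cases "\<forall>z\<in>S. p z = 0 \<longrightarrow> u1 * k1 z = 0 \<and> u2 * k2 z = 0")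
  case True
  have "u1 * (\<Sum>z\<in>S. entropy_term_real (k1 z) (p z) (F z))
      + u2 * (\<Sum>z\<in>S. entropy_term_real (k2 z) (p z) (F z))
    \<le> (u1 + u2) * (\<Sum>z\<in>S. entropy_term_real (\<gamma> * k1 z + (1 - \<gamma>) * k2 z) (p z) (F z))"
    unfolding sum_distrib_left sum.distrib[symmetric] \<gamma>_def
    using True assms by (intro sum_mono mult_entropy_term_real_concave) auto
  moreover have "(u1 + u2) * (\<gamma> * k1 z + (1 - \<gamma>) * k2 z) = 0" if "z \<in> S" "p z = 0" for z
    using True that convex_weight_mix[OF assms(2,3), of "k1 z" "k2 z"] unfolding \<gamma>_def by auto
  ultimately show ?thesis
    using True assms(1-3) by (simp add: ereal_mult_sum_entropy_term)
next
  case False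
  have neq: "ereal u * (\<Sum>z\<in>S. entropy_term (k z) (p z) (F z)) \<noteq> \<infinity>" if "0 \<le> u" for u k
    using that assms(1) by (simp add: sum_entropy_term)
  from False consider "\<exists>z\<in>S. p z = 0 \<and> u1 * k1 z \<noteq> 0" | "\<exists>z\<in>S. p z = 0 \<and> u2 * k2 z \<noteq> 0"
    by blast
  then have minf: "?E1 + ?E2 = - \<infinity>"
  proof cases
    case 1
    then have "?E1 = - \<infinity>" using assms(1,2) by (auto simp: sum_entropy_term)
    then show ?thesis using neq[OF assms(3), of k2] by (cases ?E2) auto
  next
    case 2
    then have "?E2 = - \<infinity>" using assms(1,3) by (auto simp: sum_entropy_term)
    then show ?thesis using neq[OF assms(2), of k1] by (cases ?E1) auto
  qed
  show ?thesis unfolding minf by simp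
qed

section \<open>Integrals of extended-real functions\<close>

definition pos_neg_integral :: "'a measure \<Rightarrow> ('a \<Rightarrow> ereal) \<Rightarrow> ereal" where
  "pos_neg_integral M g = enn2ereal (\<integral>\<^sup>+x. e2ennreal (g x) \<partial>M) - enn2ereal (\<integral>\<^sup>+x. e2ennreal (- g x) \<partial>M)"

lemma H_f_eq_pos_neg_integral: "H_f B P f k \<phi> = pos_neg_integral P (\<lambda>\<omega>. H_integrand B \<omega> f k \<phi>)"
  by (simp add: H_f_def pos_neg_integral_def)

lemma e2ennreal_parts_convex_comb_le:
  fixes x1 x2 x3 :: ereal and t :: real
  assumes t: "0 < t" "t < 1" and fin: "x1 \<noteq> \<infinity>" "x2 \<noteq> \<infinity>" "x3 \<noteq> \<infinity>"
    and le: "ereal t * x1 + ereal (1 - t) * x2 \<le> x3"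
  shows "ennreal t * e2ennreal x1 + ennreal (1 - t) * e2ennreal x2 + e2ennreal (- x3)
      \<le> e2ennreal x3 + ennreal t * e2ennreal (- x1) + ennreal (1 - t) * e2ennreal (- x2)"
proof (cases "x1 = - \<infinity> \<or> x2 = - \<infinity>")
  case True
  then have "ennreal t * e2ennreal (- x1) + ennreal (1 - t) * e2ennreal (- x2) = top"
    using t by (auto simp: ennreal_mult_top)
  then have rhs: "e2ennreal x3 + ennreal t * e2ennreal (- x1) + ennreal (1 - t) * e2ennreal (- x2) = top"
    by (simp only: add.assoc) simp
  show ?thesis unfolding rhs by (rule top_greatest)
next
  case False
  then obtain r1 r2 where r: "x1 = ereal r1" "x2 = ereal r2" using fin by (cases x1; cases x2) auto
  then obtain r3 where r3: "x3 = ereal r3" using le fin by (cases x3) auto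
  define pos where "pos r = max 0 (r::real)" for r
  have pos_parts: "0 \<le> pos r" "pos r - pos (- r) = r" "e2ennreal (ereal r) = ennreal (pos r)" for r
    unfolding pos_def by (simp_all add: max_def ennreal_neg)
  have "t * (pos r1 - pos (- r1)) + (1 - t) * (pos r2 - pos (- r2)) \<le> pos r3 - pos (- r3)"
    using le r r3 by (simp add: pos_parts)
  then have "t * pos r1 + (1 - t) * pos r2 + pos (- r3) \<le> pos r3 + t * pos (- r1) + (1 - t) * pos (- r2)"
    by (simp add: algebra_simps)
  then have "ennreal t * ennreal (pos r1) + ennreal (1 - t) * ennreal (pos r2) + ennreal (pos (- r3))
      \<le> ennreal (pos r3) + ennreal t * ennreal (pos (- r1)) + ennreal (1 - t) * ennreal (pos (- r2))"
    using t pos_parts(1) by (simp add: ennreal_mult[symmetric] ennreal_plus[symmetric] ennreal_leI del: ennreal_plus)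
  then show ?thesis unfolding r r3 uminus_ereal.simps pos_parts(3) .
qed

lemma ereal_convex_comb_diff_le:
  fixes P1 P2 P3 N1 N2 N3 :: ennreal and t :: real
  assumes t: "0 < t" "t < 1" and fin: "P1 < \<infinity>" "P2 < \<infinity>" "P3 < \<infinity>"
    and le: "ennreal t * P1 + ennreal (1 - t) * P2 + N3 \<le> P3 + ennreal t * N1 + ennreal (1 - t) * N2"
  shows "ereal t * (enn2ereal P1 - enn2ereal N1) + ereal (1 - t) * (enn2ereal P2 - enn2ereal N2)
     \<le> enn2ereal P3 - enn2ereal N3"
proof -
  obtain p1 p2 p3 where p: "P1 = ennreal p1" "P2 = ennreal p2" "P3 = ennreal p3" "0 \<le> p1" "0 \<le> p2" "0 \<le> p3"
    using fin by (metis ennreal_cases infinity_ennreal_def less_irrefl)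
  show ?thesis
  proof (cases "N1 = top \<or> N2 = top")
    case True
    then show ?thesis using t
      by (cases N1 rule: ennreal_cases; cases N2 rule: ennreal_cases) (auto simp: p ennreal_top_mult)
  next
    case False
    then obtain n1 n2 where n: "N1 = ennreal n1" "N2 = ennreal n2" "0 \<le> n1" "0 \<le> n2"
      by (metis ennreal_cases)
    have rhs: "P3 + ennreal t * N1 + ennreal (1 - t) * N2 = ennreal (p3 + t * n1 + (1 - t) * n2)"
      using p n t by (simp add: ennreal_mult)
    have "N3 \<le> ennreal (p3 + t * n1 + (1 - t) * n2)"
      using le unfolding rhs by (rule order_trans[rotated]) simp
    then obtain n3 where n3: "N3 = ennreal n3" "0 \<le> n3"
      by (cases N3 rule: ennreal_cases) (auto simp: top_unique)
    have lhs: "ennreal t * P1 + ennreal (1 - t) * P2 + N3 = ennreal (t * p1 + (1 - t) * p2 + n3)"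
      using p n3 t by (simp add: ennreal_mult)
    have "ennreal (t * p1 + (1 - t) * p2 + n3) \<le> ennreal (p3 + t * n1 + (1 - t) * n2)"
      using le unfolding lhs rhs .
    then have "t * p1 + (1 - t) * p2 + n3 \<le> p3 + t * n1 + (1 - t) * n2"
      using p n t by (subst (asm) ennreal_le_iff) auto
    then show ?thesis using p n n3 by (simp add: algebra_simps)
  qed
qed

lemma pos_neg_integral_convex_comb_mono:
  fixes M :: "'a measure" and g1 g2 g3 :: "'a \<Rightarrow> ereal" and t :: real
  assumes [measurable]: "g1 \<in> borel_measurable M" "g2 \<in> borel_measurable M" "g3 \<in> borel_measurable M"
    and t: "0 < t" "t < 1"
    and fin: "\<And>x. x \<in> space M \<Longrightarrow> g1 x \<noteq> \<infinity> \<and> g2 x \<noteq> \<infinity> \<and> g3 x \<noteq> \<infinity>"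
    and le: "\<And>x. x \<in> space M \<Longrightarrow> ereal t * g1 x + ereal (1 - t) * g2 x \<le> g3 x"
    and pos_fin: "(\<integral>\<^sup>+x. e2ennreal (g1 x) \<partial>M) < \<infinity>" "(\<integral>\<^sup>+x. e2ennreal (g2 x) \<partial>M) < \<infinity>"
      "(\<integral>\<^sup>+x. e2ennreal (g3 x) \<partial>M) < \<infinity>"
  shows "ereal t * pos_neg_integral M g1 + ereal (1 - t) * pos_neg_integral M g2 \<le> pos_neg_integral M g3"
proof -
  have "ennreal t * (\<integral>\<^sup>+x. e2ennreal (g1 x) \<partial>M) + ennreal (1 - t) * (\<integral>\<^sup>+x. e2ennreal (g2 x) \<partial>M)
        + (\<integral>\<^sup>+x. e2ennreal (- g3 x) \<partial>M)
      = (\<integral>\<^sup>+x. ennreal t * e2ennreal (g1 x) + ennreal (1 - t) * e2ennreal (g2 x) + e2ennreal (- g3 x) \<partial>M)"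
    by (simp add: nn_integral_add nn_integral_cmult)
  also have "\<dots> \<le> (\<integral>\<^sup>+x. e2ennreal (g3 x) + ennreal t * e2ennreal (- g1 x) + ennreal (1 - t) * e2ennreal (- g2 x) \<partial>M)"
    using fin le by (intro nn_integral_mono e2ennreal_parts_convex_comb_le[OF t]) auto
  also have "\<dots> = (\<integral>\<^sup>+x. e2ennreal (g3 x) \<partial>M) + ennreal t * (\<integral>\<^sup>+x. e2ennreal (- g1 x) \<partial>M)
        + ennreal (1 - t) * (\<integral>\<^sup>+x. e2ennreal (- g2 x) \<partial>M)"
    by (simp add: nn_integral_add nn_integral_cmult)
  finally show ?thesis
    unfolding pos_neg_integral_def by (rule ereal_convex_comb_diff_le[OF t pos_fin])
qed

lemma nn_integral_e2ennreal_less_top: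
  fixes g :: "'a \<Rightarrow> ereal"
  assumes "integrable M \<phi>" "AE x in M. g x \<le> ereal (C * \<phi> x)"
  shows "(\<integral>\<^sup>+x. e2ennreal (g x) \<partial>M) < \<infinity>"
proof -
  have "AE x in M. e2ennreal (g x) \<le> ennreal (C * \<phi> x)"
    using assms(2) by eventually_elim (metis e2ennreal_ereal e2ennreal_mono)
  then have "(\<integral>\<^sup>+x. e2ennreal (g x) \<partial>M) \<le> (\<integral>\<^sup>+x. ennreal (C * \<phi> x) \<partial>M)"
    by (rule nn_integral_mono_AE)
  also have "\<dots> < \<infinity>"
    using integrableD(2)[of M "\<lambda>x. C * \<phi> x"] assms(1) by (simp add: less_top[symmetric])
  finally show ?thesis .
qed

section \<open>Environments and the integrand of \<open>H_f\<close>\<close>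

lemma finite_steps:
  fixes \<omega> :: "('d::finite) env"
  assumes "\<omega> \<in> env_space B"
  shows "finite (steps B :: (int ^ 'd) set)"
proof (rule ccontr)
  assume "infinite (steps B :: (int ^ 'd) set)"
  then have "(\<Sum>z\<in>steps B. \<omega> 0 z) = 0" by simp
  with assms show False unfolding env_space_def by simp
qed

lemma env_space_bounded:
  assumes "\<omega> \<in> env_space B" "z \<in> steps B"
  shows "0 \<le> \<omega> x z \<and> \<omega> x z \<le> 1"
proof -
  have "\<forall>z\<in>steps B. 0 \<le> \<omega> x z" "(\<Sum>z\<in>steps B. \<omega> x z) = 1"
    using assms(1) unfolding env_space_def by auto
  moreover have "\<omega> x z \<le> (\<Sum>z\<in>steps B. \<omega> x z)"
    using calculation(1) assms finite_steps by (intro member_le_sum) auto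
  ultimately show ?thesis using assms(2) by auto
qed

lemma measurable_env_eval:
  "(\<lambda>\<omega>::('d::finite) env. \<omega> x z) \<in> borel_measurable (restrict_space borel A)"
proof -
  have "continuous_on UNIV (\<lambda>\<omega>::('d::finite) env. \<omega> x z)"
    by (intro continuous_on_compose2[OF continuous_on_product_coordinates[where i=z]
          continuous_on_product_coordinates[where i=x]]) auto
  then have "continuous_on A (\<lambda>\<omega>::('d::finite) env. \<omega> x z)" by (rule continuous_on_subset) auto
  then show ?thesis by (rule borel_measurable_continuous_on_restrict)
qed

lemma env_kernel_bounded:
  assumes "env_kernel B P k" "space P = env_space B"
  shows "AE \<omega> in P. \<forall>z\<in>steps B. 0 \<le> k \<omega> z \<and> k \<omega> z \<le> 1"
  using AE_space assms(1)[unfolded env_kernel_def, THEN conjunct2, THEN conjunct2]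
proof eventually_elim
  case (elim \<omega>)
  have "k \<omega> z \<le> (\<Sum>z\<in>steps B. k \<omega> z)" "0 \<le> k \<omega> z" if "z \<in> steps B" for z
    using assms elim(1) that finite_steps[of \<omega> B] unfolding env_kernel_def
    by (auto intro!: member_le_sum)
  then show ?case using elim(2) by auto
qed

lemma H_integrand_eq:
  "H_integrand B \<omega> f k \<phi> = (\<Sum>z\<in>steps B. entropy_term (k \<omega> z) (\<omega> 0 z) (f \<omega> z)) * ereal (\<phi> \<omega>)"
  by (simp add: H_integrand_def H_term_eq_entropy_term)

lemma measurable_entropy_term[measurable]:
  assumes [measurable]: "a \<in> borel_measurable M" "b \<in> borel_measurable M" "c \<in> borel_measurable M"
  shows "(\<lambda>x. entropy_term (a x) (b x) (c x)) \<in> borel_measurable M"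
  unfolding entropy_term_def entropy_term_real_def by measurable

lemma measurable_H_integrand:
  assumes sets: "sets P = sets (restrict_space borel (env_space B))" and "Cb B f"
    and k: "\<And>z. z \<in> steps B \<Longrightarrow> (\<lambda>\<omega>. k \<omega> z) \<in> borel_measurable P"
    and [measurable]: "\<phi> \<in> borel_measurable P"
  shows "(\<lambda>\<omega>. H_integrand B \<omega> f k \<phi>) \<in> borel_measurable P"
proof -
  have P: "borel_measurable P = borel_measurable (restrict_space borel (env_space B))"
    using sets by (intro measurable_cong_sets) auto
  have "(\<lambda>\<omega>. f \<omega> z) \<in> borel_measurable P" if "z \<in> steps B" for z
    unfolding P using \<open>Cb B f\<close> that unfolding Cb_def by (auto intro: borel_measurable_continuous_on_restrict)
  then have [measurable]: "(\<lambda>\<omega>. \<Sum>z\<in>steps B. entropy_term (k \<omega> z) (\<omega> 0 z) (f \<omega> z)) \<in> borel_measurable P"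
    using k by (intro borel_measurable_ereal_sum measurable_entropy_term) (auto simp: P measurable_env_eval)
  show ?thesis unfolding H_integrand_eq by measurable
qed

lemma H_integrand_neq_PInfty: "0 \<le> \<phi> \<omega> \<Longrightarrow> H_integrand B \<omega> f k \<phi> \<noteq> \<infinity>"
proof -
  have "(\<Sum>z\<in>steps B. entropy_term (k \<omega> z) (\<omega> 0 z) (f \<omega> z)) \<noteq> \<infinity>"
    by (simp add: sum_Pinfty entropy_term_def)
  then show "0 \<le> \<phi> \<omega> \<Longrightarrow> ?thesis"
    unfolding H_integrand_eq by (cases "\<Sum>z\<in>steps B. entropy_term (k \<omega> z) (\<omega> 0 z) (f \<omega> z)") auto
qed

lemma nn_integral_H_integrand_less_top:
  fixes P :: "('d::finite) env measure"
  assumes space: "space P = env_space B" and "Cb B f"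
    and k: "AE \<omega> in P. \<forall>z\<in>steps B. 0 \<le> k \<omega> z \<and> k \<omega> z \<le> 1"
    and "integrable P \<phi>" and \<phi>: "\<And>\<omega>. \<omega> \<in> space P \<Longrightarrow> 0 \<le> \<phi> \<omega>"
  shows "(\<integral>\<^sup>+\<omega>. e2ennreal (H_integrand B \<omega> f k \<phi>) \<partial>P) < \<infinity>"
proof -
  obtain C where C: "\<And>\<omega> z. \<omega> \<in> env_space B \<Longrightarrow> z \<in> steps B \<Longrightarrow> \<bar>f \<omega> z\<bar> \<le> C"
    using \<open>Cb B f\<close> unfolding Cb_def by auto
  have "AE \<omega> in P. H_integrand B \<omega> f k \<phi> \<le> ereal (real (card (steps B :: (int ^ 'd) set)) * (C + 1) * \<phi> \<omega>)"
    using AE_space k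
  proof eventually_elim
    case (elim \<omega>)
    have "(\<Sum>z\<in>steps B. entropy_term (k \<omega> z) (\<omega> 0 z) (f \<omega> z)) \<le> (\<Sum>z\<in>(steps B :: (int ^ 'd) set). ereal (C + 1))"
    proof (rule sum_mono)
      fix z :: "int ^ 'd" assume "z \<in> steps B"
      then show "entropy_term (k \<omega> z) (\<omega> 0 z) (f \<omega> z) \<le> ereal (C + 1)"
        using elim space C env_space_bounded[of \<omega> B z 0] by (intro entropy_term_le) auto
    qed
    then have "H_integrand B \<omega> f k \<phi> \<le> ereal (real (card (steps B :: (int ^ 'd) set)) * (C + 1)) * ereal (\<phi> \<omega>)"
      unfolding H_integrand_eq using \<phi> elim(1) by (intro ereal_mult_right_mono) auto
    then show ?case by simp
  qed
  then show ?thesis using \<open>integrable P \<phi>\<close> by (rule nn_integral_e2ennreal_less_top[rotated])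
qed

section \<open>Mixing two kernels\<close>

text \<open>Where both densities vanish the weight is \<open>0 / 0 = 0\<close>; this is harmless, since the mixed
  density vanishes there as well.\<close>

definition mix_kernel :: "real \<Rightarrow> ('a \<Rightarrow> real) \<Rightarrow> ('a \<Rightarrow> real) \<Rightarrow> ('a \<Rightarrow> 'z \<Rightarrow> real)
    \<Rightarrow> ('a \<Rightarrow> 'z \<Rightarrow> real) \<Rightarrow> 'a \<Rightarrow> 'z \<Rightarrow> real" where
  "mix_kernel t \<phi>1 \<phi>2 k1 k2 = (\<lambda>\<omega> z.
     t * \<phi>1 \<omega> / (t * \<phi>1 \<omega> + (1 - t) * \<phi>2 \<omega>) * k1 \<omega> z
     + (1 - t * \<phi>1 \<omega> / (t * \<phi>1 \<omega> + (1 - t) * \<phi>2 \<omega>)) * k2 \<omega> z)"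

lemma mix_density_mult_mix_kernel:
  assumes "0 \<le> t" "t \<le> 1" "0 \<le> \<phi>1 \<omega>" "0 \<le> \<phi>2 \<omega>"
  shows "(t * \<phi>1 \<omega> + (1 - t) * \<phi>2 \<omega>) * mix_kernel t \<phi>1 \<phi>2 k1 k2 \<omega> z
    = t * (\<phi>1 \<omega> * k1 \<omega> z) + (1 - t) * (\<phi>2 \<omega> * k2 \<omega> z)"
  using convex_weight_mix[of "t * \<phi>1 \<omega>" "(1 - t) * \<phi>2 \<omega>" "k1 \<omega> z" "k2 \<omega> z"] assms
  by (simp add: mix_kernel_def mult.assoc)

lemma mix_kernel_bounded:
  assumes "0 \<le> t" "t \<le> 1" "0 \<le> \<phi>1 \<omega>" "0 \<le> \<phi>2 \<omega>"
    and "0 \<le> k1 \<omega> z" "k1 \<omega> z \<le> 1" "0 \<le> k2 \<omega> z" "k2 \<omega> z \<le> 1"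
  shows "0 \<le> mix_kernel t \<phi>1 \<phi>2 k1 k2 \<omega> z \<and> mix_kernel t \<phi>1 \<phi>2 k1 k2 \<omega> z \<le> 1"
  unfolding mix_kernel_def using assms by (intro convex_weight_mix_bounded) auto

lemma kernel_invariant_mix:
  assumes shift: "\<And>z \<omega>. \<omega> \<in> space P \<Longrightarrow> shift z \<omega> \<in> space P"
    and "0 \<le> t" "t \<le> 1" and \<phi>: "\<And>\<omega>. \<omega> \<in> space P \<Longrightarrow> 0 \<le> \<phi>1 \<omega> \<and> 0 \<le> \<phi>2 \<omega>"
    and "kernel_invariant B P k1 \<phi>1" "kernel_invariant B P k2 \<phi>2"
  shows "kernel_invariant B P (mix_kernel t \<phi>1 \<phi>2 k1 k2) (\<lambda>\<omega>. t * \<phi>1 \<omega> + (1 - t) * \<phi>2 \<omega>)"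
  unfolding kernel_invariant_def
  using AE_space assms(5,6)[unfolded kernel_invariant_def]
proof eventually_elim
  case (elim \<omega>)
  have "(\<Sum>z\<in>steps B. (t * \<phi>1 (shift (- z) \<omega>) + (1 - t) * \<phi>2 (shift (- z) \<omega>))
           * mix_kernel t \<phi>1 \<phi>2 k1 k2 (shift (- z) \<omega>) z)
      = t * (\<Sum>z\<in>steps B. \<phi>1 (shift (- z) \<omega>) * k1 (shift (- z) \<omega>) z)
        + (1 - t) * (\<Sum>z\<in>steps B. \<phi>2 (shift (- z) \<omega>) * k2 (shift (- z) \<omega>) z)"
    using assms(2,3) \<phi>[OF shift[OF elim(1)]]
    by (simp add: mix_density_mult_mix_kernel sum.distrib sum_distrib_left)
  then show ?case using elim(2,3) by simp
qed

lemma H_integrand_mix: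
  assumes "0 \<le> t" "t \<le> 1" "0 \<le> \<phi>1 \<omega>" "0 \<le> \<phi>2 \<omega>"
    and "\<forall>z\<in>steps B. 0 \<le> k1 \<omega> z \<and> 0 \<le> k2 \<omega> z" and "\<omega> \<in> env_space B"
  shows "ereal t * H_integrand B \<omega> f k1 \<phi>1 + ereal (1 - t) * H_integrand B \<omega> f k2 \<phi>2
     \<le> H_integrand B \<omega> f (mix_kernel t \<phi>1 \<phi>2 k1 k2) (\<lambda>\<omega>. t * \<phi>1 \<omega> + (1 - t) * \<phi>2 \<omega>)"
proof -
  have "ereal (t * \<phi>1 \<omega>) * (\<Sum>z\<in>steps B. entropy_term (k1 \<omega> z) (\<omega> 0 z) (f \<omega> z))
      + ereal ((1 - t) * \<phi>2 \<omega>) * (\<Sum>z\<in>steps B. entropy_term (k2 \<omega> z) (\<omega> 0 z) (f \<omega> z))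
    \<le> ereal (t * \<phi>1 \<omega> + (1 - t) * \<phi>2 \<omega>)
      * (\<Sum>z\<in>steps B. entropy_term (mix_kernel t \<phi>1 \<phi>2 k1 k2 \<omega> z) (\<omega> 0 z) (f \<omega> z))"
    unfolding mix_kernel_def using assms finite_steps[OF assms(6)] env_space_bounded[OF assms(6)]
    by (intro sum_entropy_term_concave) auto
  then show ?thesis unfolding H_integrand_eq by (simp add: mult_ac times_ereal.simps(1)[symmetric] del: times_ereal.simps(1))
qed

lemma H_f_mix:
  fixes P :: "('d::finite) env measure"
  assumes "standing_env B P" and "Cb B f" and t: "0 < t" "t < 1"
    and k1: "env_kernel B P k1" and \<phi>1: "prob_density P \<phi>1"
    and k2: "env_kernel B P k2" and \<phi>2: "prob_density P \<phi>2"
  shows "ereal t * H_f B P f k1 \<phi>1 + ereal (1 - t) * H_f B P f k2 \<phi>2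
    \<le> H_f B P f (mix_kernel t \<phi>1 \<phi>2 k1 k2) (\<lambda>\<omega>. t * \<phi>1 \<omega> + (1 - t) * \<phi>2 \<omega>)"
  unfolding H_f_eq_pos_neg_integral
proof (rule pos_neg_integral_convex_comb_mono[OF _ _ _ t])
  let ?k3 = "mix_kernel t \<phi>1 \<phi>2 k1 k2" and ?\<phi>3 = "\<lambda>\<omega>. t * \<phi>1 \<omega> + (1 - t) * \<phi>2 \<omega>"
  have space: "space P = env_space B" and sets: "sets P = sets (restrict_space borel (env_space B))"
    using \<open>standing_env B P\<close> unfolding standing_env_def by auto
  have [measurable]: "\<phi>1 \<in> borel_measurable P" "\<phi>2 \<in> borel_measurable P"
    and \<phi>_nonneg: "\<And>\<omega>. \<omega> \<in> space P \<Longrightarrow> 0 \<le> \<phi>1 \<omega> \<and> 0 \<le> \<phi>2 \<omega> \<and> 0 \<le> ?\<phi>3 \<omega>"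
    and "integrable P \<phi>1" "integrable P \<phi>2"
    using \<phi>1 \<phi>2 t unfolding prob_density_def by auto
  have k_meas: "(\<lambda>\<omega>. k1 \<omega> z) \<in> borel_measurable P" "(\<lambda>\<omega>. k2 \<omega> z) \<in> borel_measurable P"
    and k_nonneg: "\<And>\<omega>. \<omega> \<in> space P \<Longrightarrow> 0 \<le> k1 \<omega> z \<and> 0 \<le> k2 \<omega> z"
    if "z \<in> steps B" for z
    using k1 k2 that unfolding env_kernel_def by auto
  have "(\<lambda>\<omega>. ?k3 \<omega> z) \<in> borel_measurable P" if "z \<in> steps B" for z
    using k_meas[OF that] unfolding mix_kernel_def by measurable
  then show "(\<lambda>\<omega>. H_integrand B \<omega> f k1 \<phi>1) \<in> borel_measurable P"
    "(\<lambda>\<omega>. H_integrand B \<omega> f k2 \<phi>2) \<in> borel_measurable P"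
    "(\<lambda>\<omega>. H_integrand B \<omega> f ?k3 ?\<phi>3) \<in> borel_measurable P"
    using sets \<open>Cb B f\<close> k_meas by (auto intro!: measurable_H_integrand)
  show "H_integrand B \<omega> f k1 \<phi>1 \<noteq> \<infinity> \<and> H_integrand B \<omega> f k2 \<phi>2 \<noteq> \<infinity>
      \<and> H_integrand B \<omega> f ?k3 ?\<phi>3 \<noteq> \<infinity>"
    if "\<omega> \<in> space P" for \<omega>
    using \<phi>_nonneg[OF that] by (auto intro!: H_integrand_neq_PInfty)
  show "ereal t * H_integrand B \<omega> f k1 \<phi>1 + ereal (1 - t) * H_integrand B \<omega> f k2 \<phi>2
      \<le> H_integrand B \<omega> f ?k3 ?\<phi>3" if "\<omega> \<in> space P" for \<omega>
    using t \<phi>_nonneg[OF that] k_nonneg[OF _ that] that space by (intro H_integrand_mix) auto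
  have "AE \<omega> in P. \<forall>z\<in>steps B. 0 \<le> ?k3 \<omega> z \<and> ?k3 \<omega> z \<le> 1"
    using env_kernel_bounded[OF k1 space] env_kernel_bounded[OF k2 space] AE_space
    by eventually_elim (use t \<phi>_nonneg
        in \<open>auto intro: mix_kernel_bounded[THEN conjunct1] mix_kernel_bounded[THEN conjunct2]\<close>)
  then show "(\<integral>\<^sup>+\<omega>. e2ennreal (H_integrand B \<omega> f ?k3 ?\<phi>3) \<partial>P) < \<infinity>"
    using \<open>integrable P \<phi>1\<close> \<open>integrable P \<phi>2\<close> \<phi>_nonneg
    by (intro nn_integral_H_integrand_less_top[OF space \<open>Cb B f\<close>]) auto
  show "(\<integral>\<^sup>+\<omega>. e2ennreal (H_integrand B \<omega> f k1 \<phi>1) \<partial>P) < \<infinity>"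
    by (rule nn_integral_H_integrand_less_top[OF space \<open>Cb B f\<close> env_kernel_bounded[OF k1 space]
          \<open>integrable P \<phi>1\<close>]) (use \<phi>_nonneg in auto)
  show "(\<integral>\<^sup>+\<omega>. e2ennreal (H_integrand B \<omega> f k2 \<phi>2) \<partial>P) < \<infinity>"
    by (rule nn_integral_H_integrand_less_top[OF space \<open>Cb B f\<close> env_kernel_bounded[OF k2 space]
          \<open>integrable P \<phi>2\<close>]) (use \<phi>_nonneg in auto)
qed

theorem lemma2p2:
  fixes B :: nat and P :: "('d::finite) env measure"
    and f k1 k2 :: "'d env \<Rightarrow> int ^ 'd \<Rightarrow> real"
    and \<phi>1 \<phi>2 :: "'d env \<Rightarrow> real" and t :: real
  assumes "B \<ge> 1"
    and "standing_env B P"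
    and "Cb B f"
    and "0 < t" and "t < 1"
    and "env_kernel B P k1" and "prob_density P \<phi>1" and "kernel_invariant B P k1 \<phi>1"
    and "env_kernel B P k2" and "prob_density P \<phi>2" and "kernel_invariant B P k2 \<phi>2"
  shows "kernel_invariant B P
           (\<lambda>\<omega> z. (t * \<phi>1 \<omega> / (t * \<phi>1 \<omega> + (1 - t) * \<phi>2 \<omega>)) * k1 \<omega> z
                 + (1 - t * \<phi>1 \<omega> / (t * \<phi>1 \<omega> + (1 - t) * \<phi>2 \<omega>)) * k2 \<omega> z)
           (\<lambda>\<omega>. t * \<phi>1 \<omega> + (1 - t) * \<phi>2 \<omega>)
       \<and> H_f B P f
           (\<lambda>\<omega> z. (t * \<phi>1 \<omega> / (t * \<phi>1 \<omega> + (1 - t) * \<phi>2 \<omega>)) * k1 \<omega> z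
                 + (1 - t * \<phi>1 \<omega> / (t * \<phi>1 \<omega> + (1 - t) * \<phi>2 \<omega>)) * k2 \<omega> z)
           (\<lambda>\<omega>. t * \<phi>1 \<omega> + (1 - t) * \<phi>2 \<omega>)
         \<ge> ereal t * H_f B P f k1 \<phi>1 + ereal (1 - t) * H_f B P f k2 \<phi>2"
proof -
  have shift: "shift z \<omega> \<in> space P" if "\<omega> \<in> space P" for z \<omega>
  proof -
    have "shift z \<in> P \<rightarrow>\<^sub>M P" using assms(2) unfolding standing_env_def by simp
    then show ?thesis using that by (rule measurable_space)
  qed
  have "\<omega> \<in> space P \<Longrightarrow> 0 \<le> \<phi>1 \<omega> \<and> 0 \<le> \<phi>2 \<omega>" for \<omega>
    using assms(7,10) unfolding prob_density_def by auto
  then have "kernel_invariant B P (mix_kernel t \<phi>1 \<phi>2 k1 k2) (\<lambda>\<omega>. t * \<phi>1 \<omega> + (1 - t) * \<phi>2 \<omega>)"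
    using assms(4,5,8,11) by (intro kernel_invariant_mix[OF shift]) auto
  moreover have "ereal t * H_f B P f k1 \<phi>1 + ereal (1 - t) * H_f B P f k2 \<phi>2
      \<le> H_f B P f (mix_kernel t \<phi>1 \<phi>2 k1 k2) (\<lambda>\<omega>. t * \<phi>1 \<omega> + (1 - t) * \<phi>2 \<omega>)"
    using assms(2-7,9,10) by (rule H_f_mix)
  ultimately show ?thesis unfolding mix_kernel_def by blast
qed

end
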